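(* Let $V_1,V_2,V_3$ be closed subspaces of a Hilbert space $\mathcal H$ such that for each pair $i\ne j$ neither of $V_i,V_j$ contains the other, and let $0<\alpha_{ij}\le\angle(V_i,V_j)$ with $\varepsilon_{ij}=\cos\alpha_{ij}$ ($\alpha_{ij}=\alpha_{ji}$). Then, whenever the angle on the left-hand side is defined (i.e. neither of the two subspaces involved contains the other): (a) $\cos\angle(\overline{V_1+V_3},\overline{V_2+V_3})\le\dfrac{\varepsilon_{12}+\varepsilon_{13}\varepsilon_{23}}{\sqrt{1-\varepsilon_{13}^2}\sqrt{1-\varepsilon_{23}^2}}$; (b) $\cos\angle(V_1\cap V_3,V_2\cap V_3)\le\dfrac{\varepsilon_{12}+\varepsilon_{13}\varepsilon_{23}}{\sqrt{1-\varepsilon_{13}^2}\sqrt{1-\varepsilon_{23}^2}}$.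
   Context: $\overline{V_i+V_3}$ is the closure of $V_i+V_3$. For closed subspaces $W_1,W_2$ neither of which contains the other, the (Friederichs) angle $\angle(W_1,W_2)\in[0,\pi/2]$ is defined by $\cos\angle(W_1,W_2)=\sup\{|\langle w_1,w_2\rangle| : w_i\in W_i,\ \|w_i\|=1,\ w_i\perp W_1\cap W_2\}$. *)

theory Defs
  imports "HOL-Analysis.Analysis"
begin

definition closed_subspace :: "'a::real_inner set \<Rightarrow> bool" where
  "closed_subspace V \<longleftrightarrow> subspace V \<and> closed V"

definition friedrichs_cos :: "'a::real_inner set \<Rightarrow> 'a set \<Rightarrow> real" where
  "friedrichs_cos W1 W2 = Sup {\<bar>w1 \<bullet> w2\<bar> | w1 w2.
       w1 \<in> W1 \<and> w2 \<in> W2 \<and> norm w1 = 1 \<and> norm w2 = 1 \<and>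
       (\<forall>x \<in> W1 \<inter> W2. w1 \<bullet> x = 0) \<and> (\<forall>x \<in> W1 \<inter> W2. w2 \<bullet> x = 0)}"

definition friedrichs_angle :: "'a::real_inner set \<Rightarrow> 'a set \<Rightarrow> real" where
  "friedrichs_angle W1 W2 = arccos (friedrichs_cos W1 W2)"

definition ssum :: "'a::real_vector set \<Rightarrow> 'a set \<Rightarrow> 'a set" where
  "ssum A B = {x + y | x y. x \<in> A \<and> y \<in> B}"

end

theory Submission
  imports Defs
begin

text \<open>
  Let \<open>Q\<close> be the orthogonal projection onto \<open>V\<^sub>3\<^sup>\<bottom>\<close>. A vector of
  \<open>closure (V\<^sub>1 + V\<^sub>3)\<close> orthogonal to the intersection of the two sums lies in
  \<open>V\<^sub>3\<^sup>\<bottom>\<close>, hence in the closure of \<open>Q V\<^sub>1\<close>; similarly on the other side. Reducing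
  \<open>x \<in> V\<^sub>1\<close> and \<open>y \<in> V\<^sub>2\<close> modulo \<open>V\<^sub>1 \<inter> V\<^sub>3\<close>, \<open>V\<^sub>2 \<inter> V\<^sub>3\<close> and
  \<open>V\<^sub>1 \<inter> V\<^sub>2\<close>, the identity \<open>x \<bullet> Q y = x \<bullet> y - P x \<bullet> P y\<close> (\<open>P\<close> the
  projection onto \<open>V\<^sub>3\<close>) gives \<open>\<bar>x \<bullet> Q y\<bar> \<le> (\<epsilon>\<^sub>1\<^sub>2 + \<epsilon>\<^sub>1\<^sub>3\<epsilon>\<^sub>2\<^sub>3) |x| |y|\<close>,
  while \<open>|Q x| \<ge> \<surd>(1 - \<epsilon>\<^sub>1\<^sub>3\<^sup>2) |x|\<close> and \<open>|Q y| \<ge> \<surd>(1 - \<epsilon>\<^sub>2\<^sub>3\<^sup>2) |y|\<close>.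
  Continuity of the inner product carries the resulting bound to the closures, which is (a).
  Part (b) is (a) for the orthogonal complements: passing to complements does not increase the
  cosine of the Friedrichs angle, and \<open>(closure (V\<^sub>1\<^sup>\<bottom> + V\<^sub>3\<^sup>\<bottom>))\<^sup>\<bottom> = V\<^sub>1 \<inter> V\<^sub>3\<close>.
\<close>

lemma parallelogram_law:
  fixes u w :: "'a::real_inner"
  shows "(norm (u - w))\<^sup>2 + (norm (u + w))\<^sup>2 = 2 * (norm u)\<^sup>2 + 2 * (norm w)\<^sup>2"
  by (simp add: power2_norm_eq_inner inner_diff_left inner_diff_right inner_add_left
      inner_add_right inner_commute)

lemma minimizing_sequence_Cauchy:
  fixes f :: "nat \<Rightarrow> 'a::real_inner"
  assumes "convex S" and f: "\<And>n. f n \<in> S" and d: "\<And>y. y \<in> S \<Longrightarrow> d \<le> norm (x - y)"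
    and lim: "(\<lambda>n. norm (x - f n)) \<longlonglongrightarrow> d"
  shows "Cauchy f"
proof (rule CauchyI)
  fix e :: real assume "0 < e"
  have d0: "0 \<le> d" using lim by (rule LIMSEQ_le_const) simp
  have dist_bound: "(norm (f m - f n))\<^sup>2 \<le> 2 * (norm (x - f m))\<^sup>2 + 2 * (norm (x - f n))\<^sup>2 - 4 * d\<^sup>2"
    for m n
  proof -
    define c where "c = (1/2) *\<^sub>R (f m + f n)"
    have "c \<in> S" using \<open>convex S\<close> f unfolding c_def by (simp add: convexD scaleR_add_right)
    have "(x - f m) + (x - f n) = 2 *\<^sub>R (x - c)" unfolding c_def by (simp add: algebra_simps scaleR_2)
    then have "norm ((x - f m) + (x - f n)) = 2 * norm (x - c)" by simp
    moreover have "d \<le> norm (x - c)" using d \<open>c \<in> S\<close> by blast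
    ultimately have "4 * d\<^sup>2 \<le> (norm ((x - f m) + (x - f n)))\<^sup>2"
      using d0 by (simp add: power_mult_distrib power_mono)
    then show ?thesis using parallelogram_law[of "x - f m" "x - f n"]
      by (simp add: norm_minus_commute)
  qed
  have "(\<lambda>n. (norm (x - f n))\<^sup>2) \<longlonglongrightarrow> d\<^sup>2" using lim by (rule tendsto_power)
  then have "eventually (\<lambda>n. (norm (x - f n))\<^sup>2 < d\<^sup>2 + e\<^sup>2 / 4) sequentially"
    using \<open>0 < e\<close> by (intro order_tendstoD(2)) auto
  then obtain N where N: "\<And>n. n \<ge> N \<Longrightarrow> (norm (x - f n))\<^sup>2 < d\<^sup>2 + e\<^sup>2 / 4"
    unfolding eventually_sequentially by blast
  show "\<exists>N. \<forall>m\<ge>N. \<forall>n\<ge>N. norm (f m - f n) < e"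
  proof (intro exI allI impI)
    fix m n assume "N \<le> m" "N \<le> n"
    then have "(norm (f m - f n))\<^sup>2 < e\<^sup>2" using dist_bound[of m n] N[of m] N[of n] by linarith
    then show "norm (f m - f n) < e" using \<open>0 < e\<close> by (simp add: power_less_imp_less_base)
  qed
qed

lemma nearest_point_exists:
  fixes S :: "'a::{real_inner,complete_space} set"
  assumes "closed S" "convex S" "S \<noteq> {}"
  obtains p where "p \<in> S" "\<And>y. y \<in> S \<Longrightarrow> norm (x - p) \<le> norm (x - y)"
proof -
  define D where "D = (\<lambda>y. norm (x - y)) ` S"
  have "bdd_below D" unfolding D_def by (rule bdd_belowI[of _ 0]) auto
  then have "Inf D \<in> closure D" using \<open>S \<noteq> {}\<close> unfolding D_def
    by (intro closure_contains_Inf) auto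
  then obtain g where g: "\<And>n. g n \<in> D" "g \<longlonglongrightarrow> Inf D" by (meson closure_sequential)
  then obtain f where f: "\<And>n. f n \<in> S" "\<And>n. g n = norm (x - f n)"
    unfolding D_def image_iff by metis
  have Inf_le: "Inf D \<le> norm (x - y)" if "y \<in> S" for y
    unfolding D_def using \<open>bdd_below D\<close> that by (auto intro!: cInf_lower simp: D_def)
  have lim: "(\<lambda>n. norm (x - f n)) \<longlonglongrightarrow> Inf D" using g(2) by (simp add: f(2)[symmetric])
  have "Cauchy f" using \<open>convex S\<close> f(1) Inf_le lim by (rule minimizing_sequence_Cauchy)
  then obtain p where p: "f \<longlonglongrightarrow> p" using Cauchy_convergent_iff convergent_def by blast
  have "p \<in> S" using \<open>closed S\<close> f(1) p closed_sequentially by blast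
  moreover have "(\<lambda>n. norm (x - f n)) \<longlonglongrightarrow> norm (x - p)" by (intro tendsto_intros p)
  then have "norm (x - p) = Inf D" using lim LIMSEQ_unique by blast
  ultimately show thesis using Inf_le that by simp
qed

lemma nearest_point_subspace_orthogonal:
  assumes "subspace V" "p \<in> V" and nearest: "\<And>y. y \<in> V \<Longrightarrow> norm (x - p) \<le> norm (x - y)"
  shows "x - p \<in> V\<^sup>\<bottom>"
  unfolding orthogonal_comp_def orthogonal_def
proof (intro CollectI ballI)
  fix v assume "v \<in> V"
  show "v \<bullet> (x - p) = 0"
  proof (cases "v = 0")
    case False
    define t where "t = ((x - p) \<bullet> v) / (v \<bullet> v)"
    have "p + t *\<^sub>R v \<in> V" using assms \<open>v \<in> V\<close> by (simp add: subspace_add subspace_scale)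
    then have "(norm (x - p))\<^sup>2 \<le> (norm ((x - p) - t *\<^sub>R v))\<^sup>2"
      using nearest by (simp add: power_mono diff_diff_eq)
    also have "\<dots> = (norm (x - p))\<^sup>2 - 2 * t * ((x - p) \<bullet> v) + t\<^sup>2 * (v \<bullet> v)"
      by (simp only: power2_norm_eq_inner)
        (simp add: inner_diff_left inner_diff_right inner_commute algebra_simps power2_eq_square)
    also have "\<dots> = (norm (x - p))\<^sup>2 - ((x - p) \<bullet> v)\<^sup>2 / (v \<bullet> v)"
      unfolding t_def using False by (simp add: power2_eq_square field_simps)
    finally have "((x - p) \<bullet> v)\<^sup>2 / (v \<bullet> v) \<le> 0" by simp
    moreover have "0 < v \<bullet> v" using False by simp
    ultimately have "((x - p) \<bullet> v)\<^sup>2 \<le> 0" by (simp add: divide_le_0_iff)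
    then show ?thesis by (simp add: inner_commute)
  qed simp
qed

lemma mem_orthogonal_comp_iff: "x \<in> W\<^sup>\<bottom> \<longleftrightarrow> (\<forall>y\<in>W. x \<bullet> y = 0)"
  by (auto simp: orthogonal_comp_def orthogonal_def inner_commute)

lemma closed_orthogonal_comp: "closed (W\<^sup>\<bottom> :: 'a::real_inner set)"
proof -
  have "W\<^sup>\<bottom> = (\<Inter>y\<in>W. {x. x \<bullet> y = 0})" by (auto simp: mem_orthogonal_comp_iff)
  moreover have "closed {x::'a. x \<bullet> y = 0}" for y by (intro closed_Collect_eq continuous_intros)
  ultimately show ?thesis by auto
qed

lemma closed_subspace_orthogonal_comp: "closed_subspace (W\<^sup>\<bottom>)"
  by (simp add: closed_subspace_def subspace_orthogonal_comp closed_orthogonal_comp)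

lemma closed_subspace_Int:
  "closed_subspace A \<Longrightarrow> closed_subspace B \<Longrightarrow> closed_subspace (A \<inter> B)"
  by (simp add: closed_subspace_def subspace_inter closed_Int)

lemma subspace_closure:
  fixes S :: "'a::real_normed_vector set"
  assumes "subspace S"
  shows "subspace (closure S)"
  unfolding subspace_def
proof (intro conjI ballI allI)
  show "0 \<in> closure S" using assms closure_subset subspace_0 by blast
  have "continuous_on UNIV (\<lambda>z. fst z + snd z :: 'a)" by (intro continuous_intros)
  then have "(\<lambda>z. fst z + snd z) ` closure (S \<times> S) \<subseteq> closure ((\<lambda>z. fst z + snd z) ` (S \<times> S))"
    by (rule continuous_image_closure_subset) simp
  also have "(\<lambda>z. fst z + snd z) ` (S \<times> S) \<subseteq> S" using assms by (auto simp: subspace_add)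
  finally show "x + y \<in> closure S" if "x \<in> closure S" "y \<in> closure S" for x y
    using that by (force simp: closure_Times closure_mono)
  fix c :: real
  have "(\<lambda>x. c *\<^sub>R x) ` closure S \<subseteq> closure ((\<lambda>x. c *\<^sub>R x) ` S)"
    by (intro continuous_image_closure_subset[of UNIV] continuous_intros) simp
  also have "(\<lambda>x. c *\<^sub>R x) ` S \<subseteq> S" using assms by (auto simp: subspace_scale)
  finally show "c *\<^sub>R x \<in> closure S" if "x \<in> closure S" for x
    using that closure_mono by blast
qed

lemma subspace_ssum: "subspace A \<Longrightarrow> subspace B \<Longrightarrow> subspace (ssum A B)"
  unfolding ssum_def by (rule subspace_sums)

lemma closed_subspace_closure_ssum:
  "subspace A \<Longrightarrow> subspace B \<Longrightarrow> closed_subspace (closure (ssum A B))"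
  by (simp add: closed_subspace_def subspace_closure subspace_ssum)

lemma subset_ssum_left: "subspace B \<Longrightarrow> A \<subseteq> ssum A B"
  unfolding ssum_def by (force simp: subspace_0)

lemma subset_ssum_right: "subspace A \<Longrightarrow> B \<subseteq> ssum A B"
  unfolding ssum_def by (force simp: subspace_0)

lemma orthogonal_comp_closure: "(closure S)\<^sup>\<bottom> = (S :: 'a::real_inner set)\<^sup>\<bottom>"
proof
  show "(closure S)\<^sup>\<bottom> \<subseteq> S\<^sup>\<bottom>" by (rule orthogonal_comp_anti_mono[OF closure_subset])
  show "S\<^sup>\<bottom> \<subseteq> (closure S)\<^sup>\<bottom>"
  proof
    fix x assume "x \<in> S\<^sup>\<bottom>"
    then have "S \<subseteq> {x}\<^sup>\<bottom>" by (auto simp: mem_orthogonal_comp_iff inner_commute)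
    then have "closure S \<subseteq> {x}\<^sup>\<bottom>" using closed_orthogonal_comp by (rule closure_minimal)
    then show "x \<in> (closure S)\<^sup>\<bottom>" by (auto simp: mem_orthogonal_comp_iff inner_commute)
  qed
qed

lemma orthogonal_comp_ssum:
  assumes "subspace A" "subspace B"
  shows "(ssum A B)\<^sup>\<bottom> = A\<^sup>\<bottom> \<inter> B\<^sup>\<bottom>"
proof
  show "(ssum A B)\<^sup>\<bottom> \<subseteq> A\<^sup>\<bottom> \<inter> B\<^sup>\<bottom>"
    using orthogonal_comp_anti_mono subset_ssum_left subset_ssum_right assms by (metis Int_greatest)
  show "A\<^sup>\<bottom> \<inter> B\<^sup>\<bottom> \<subseteq> (ssum A B)\<^sup>\<bottom>"
    unfolding ssum_def by (auto simp: mem_orthogonal_comp_iff inner_add_right)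
qed

lemma orthogonal_decomposition_exists:
  fixes V :: "'a::{real_inner,complete_space} set"
  assumes "closed_subspace V"
  shows "\<exists>p. p \<in> V \<and> x - p \<in> V\<^sup>\<bottom>"
proof -
  have "subspace V" "closed V" using assms by (auto simp: closed_subspace_def)
  then have "convex V" "V \<noteq> {}" by (auto simp: subspace_imp_convex dest: subspace_0)
  then obtain p where "p \<in> V" "\<And>y. y \<in> V \<Longrightarrow> norm (x - p) \<le> norm (x - y)"
    using nearest_point_exists[OF \<open>closed V\<close>] by blast
  then show ?thesis using nearest_point_subspace_orthogonal \<open>subspace V\<close> by blast
qed

definition orthogonal_projection :: "'a::real_inner set \<Rightarrow> 'a \<Rightarrow> 'a" where
  "orthogonal_projection V x = (SOME p. p \<in> V \<and> x - p \<in> V\<^sup>\<bottom>)"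

context
  fixes V :: "'a::{real_inner,complete_space} set"
  assumes closed_subspace_V: "closed_subspace V"
begin

private abbreviation P where "P \<equiv> orthogonal_projection V"

lemma orthogonal_projection_in: "P x \<in> V"
  and orthogonal_projection_orthogonal: "x - P x \<in> V\<^sup>\<bottom>"
  using someI_ex[OF orthogonal_decomposition_exists[OF closed_subspace_V, of x]]
  unfolding orthogonal_projection_def by blast+

lemma orthogonal_projection_unique:
  assumes "p \<in> V" "x - p \<in> V\<^sup>\<bottom>"
  shows "P x = p"
proof -
  have "P x - p \<in> V" using closed_subspace_V assms(1) orthogonal_projection_in
    by (simp add: closed_subspace_def subspace_diff)
  then have "(x - p) \<bullet> (P x - p) = 0" "(x - P x) \<bullet> (P x - p) = 0"
    using assms(2) orthogonal_projection_orthogonal by (auto simp: mem_orthogonal_comp_iff)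
  moreover have "(P x - p) \<bullet> (P x - p) = (x - p) \<bullet> (P x - p) - (x - P x) \<bullet> (P x - p)"
    by (simp add: inner_diff_left)
  ultimately have "(P x - p) \<bullet> (P x - p) = 0" by simp
  then show ?thesis by simp
qed

lemma orthogonal_projection_id: "x \<in> V \<Longrightarrow> P x = x"
  by (rule orthogonal_projection_unique) (auto simp: mem_orthogonal_comp_iff)

lemma orthogonal_projection_eq_0: "x \<in> V\<^sup>\<bottom> \<Longrightarrow> P x = 0"
  using closed_subspace_V by (intro orthogonal_projection_unique) (auto simp: closed_subspace_def subspace_0)

lemma linear_orthogonal_projection: "linear P"
proof
  have sV: "subspace V" using closed_subspace_V by (simp add: closed_subspace_def)
  show "P (x + y) = P x + P y" for x y
  proof (rule orthogonal_projection_unique)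
    show "P x + P y \<in> V" using sV orthogonal_projection_in by (simp add: subspace_add)
    have "x + y - (P x + P y) = (x - P x) + (y - P y)" by simp
    then show "x + y - (P x + P y) \<in> V\<^sup>\<bottom>"
      using orthogonal_projection_orthogonal subspace_orthogonal_comp by (metis subspace_add)
  qed
  show "P (c *\<^sub>R x) = c *\<^sub>R P x" for c x
  proof (rule orthogonal_projection_unique)
    show "c *\<^sub>R P x \<in> V" using sV orthogonal_projection_in by (simp add: subspace_scale)
    have "c *\<^sub>R x - c *\<^sub>R P x = c *\<^sub>R (x - P x)" by (simp add: scaleR_diff_right)
    then show "c *\<^sub>R x - c *\<^sub>R P x \<in> V\<^sup>\<bottom>"
      using orthogonal_projection_orthogonal subspace_orthogonal_comp by (metis subspace_scale)
  qed
qed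

lemma inner_orthogonal_projection_left: "P x \<bullet> y = P x \<bullet> P y"
proof -
  have "(y - P y) \<bullet> P x = 0"
    using orthogonal_projection_orthogonal[of y] orthogonal_projection_in[of x]
    by (simp add: mem_orthogonal_comp_iff)
  then have "P x \<bullet> y - P x \<bullet> P y = 0" by (metis inner_commute inner_diff_right)
  then show ?thesis by simp
qed

lemma inner_orthogonal_projection_commute: "P x \<bullet> y = x \<bullet> P y"
  using inner_orthogonal_projection_left[of x y] inner_orthogonal_projection_left[of y x]
  by (simp add: inner_commute)

lemma norm_orthogonal_projection_pythagoras: "(norm x)\<^sup>2 = (norm (P x))\<^sup>2 + (norm (x - P x))\<^sup>2"
proof -
  have "P x \<bullet> (x - P x) = 0"
    using inner_orthogonal_projection_left[of x x] by (simp add: inner_diff_right)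
  then show ?thesis
    by (simp add: power2_norm_eq_inner inner_diff_left inner_diff_right inner_commute)
qed

lemma norm_orthogonal_projection_le: "norm (P x) \<le> norm x"
proof (rule power2_le_imp_le)
  show "(norm (P x))\<^sup>2 \<le> (norm x)\<^sup>2"
    using norm_orthogonal_projection_pythagoras[of x] zero_le_power2[of "norm (x - P x)"] by linarith
qed simp

lemma continuous_on_orthogonal_projection: "continuous_on S P"
proof -
  interpret linear P by (rule linear_orthogonal_projection)
  have "bounded_linear P"
    by (rule bounded_linear_intro[of _ 1]) (simp_all add: add scale norm_orthogonal_projection_le)
  then show ?thesis by (rule linear_continuous_on)
qed

end

lemma orthogonal_comp_orthogonal_comp:
  fixes V :: "'a::{real_inner,complete_space} set"
  assumes "closed_subspace V"
  shows "V\<^sup>\<bottom>\<^sup>\<bottom> = V"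
proof
  show "V \<subseteq> V\<^sup>\<bottom>\<^sup>\<bottom>" by (rule orthogonal_comp_subset)
  show "V\<^sup>\<bottom>\<^sup>\<bottom> \<subseteq> V"
  proof
    fix x assume x: "x \<in> V\<^sup>\<bottom>\<^sup>\<bottom>"
    let ?y = "x - orthogonal_projection V x"
    have "?y \<in> V\<^sup>\<bottom>" by (rule orthogonal_projection_orthogonal[OF assms])
    then have "x \<bullet> ?y = 0" and "orthogonal_projection V x \<bullet> ?y = 0"
      using x orthogonal_projection_in[OF assms] by (auto simp: mem_orthogonal_comp_iff inner_commute)
    then have "?y \<bullet> ?y = 0" by (simp add: inner_diff_left)
    then have "x = orthogonal_projection V x" by simp
    then show "x \<in> V" using orthogonal_projection_in[OF assms, of x] by simp
  qed
qed

lemma orthogonal_projection_orthogonal_comp: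
  fixes V :: "'a::{real_inner,complete_space} set"
  assumes "closed_subspace V"
  shows "orthogonal_projection (V\<^sup>\<bottom>) x = x - orthogonal_projection V x"
  using assms by (intro orthogonal_projection_unique closed_subspace_orthogonal_comp)
    (simp_all add: orthogonal_projection_orthogonal orthogonal_comp_orthogonal_comp orthogonal_projection_in)

lemma orthogonal_comp_Int_orthogonal_comp:
  fixes A B :: "'a::{real_inner,complete_space} set"
  assumes "subspace A" "subspace B"
  shows "(A\<^sup>\<bottom> \<inter> B\<^sup>\<bottom>)\<^sup>\<bottom> = closure (ssum A B)"
  using assms orthogonal_comp_orthogonal_comp[OF closed_subspace_closure_ssum[OF assms]]
  by (simp add: orthogonal_comp_closure orthogonal_comp_ssum)

lemma orthogonal_comp_closure_ssum_orthogonal_comp: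
  fixes V W :: "'a::{real_inner,complete_space} set"
  assumes "closed_subspace V" "closed_subspace W"
  shows "(closure (ssum (V\<^sup>\<bottom>) (W\<^sup>\<bottom>)))\<^sup>\<bottom> = V \<inter> W"
  by (simp add: orthogonal_comp_closure orthogonal_comp_ssum subspace_orthogonal_comp
      orthogonal_comp_orthogonal_comp assms)

lemma orthogonal_projection_orthogonal_comp_cong:
  fixes W :: "'a::{real_inner,complete_space} set"
  assumes "closed_subspace W" "x - y \<in> W"
  shows "orthogonal_projection (W\<^sup>\<bottom>) x = orthogonal_projection (W\<^sup>\<bottom>) y"
proof -
  note Q = closed_subspace_orthogonal_comp[of W]
  have "orthogonal_projection (W\<^sup>\<bottom>) (x - y) = 0"
    by (rule orthogonal_projection_eq_0[OF Q]) (use assms(2) orthogonal_comp_subset in blast)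
  then show ?thesis by (simp add: linear_diff[OF linear_orthogonal_projection[OF Q]])
qed

lemma Int_orthogonal_decomposition:
  fixes V W :: "'a::{real_inner,complete_space} set"
  assumes "closed_subspace V" "closed_subspace W" "y \<in> V"
  obtains y' where "y' \<in> V" "y' \<in> (V \<inter> W)\<^sup>\<bottom>" "y - y' \<in> V \<inter> W" "norm y' \<le> norm y"
proof
  let ?M = "V \<inter> W"
  have M: "closed_subspace ?M" by (rule closed_subspace_Int[OF assms(1,2)])
  show "y - orthogonal_projection ?M y \<in> V"
    using assms orthogonal_projection_in[OF M, of y] by (auto simp: closed_subspace_def subspace_diff)
  show "y - orthogonal_projection ?M y \<in> ?M\<^sup>\<bottom>" by (rule orthogonal_projection_orthogonal[OF M])
  show "y - (y - orthogonal_projection ?M y) \<in> ?M" using orthogonal_projection_in[OF M] by simp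
  show "norm (y - orthogonal_projection ?M y) \<le> norm y"
    using norm_orthogonal_projection_le[OF closed_subspace_orthogonal_comp]
    by (metis orthogonal_projection_orthogonal_comp[OF M])
qed

lemma closure_ssum_Int_orthogonal_comp_subset:
  fixes V W :: "'a::{real_inner,complete_space} set"
  assumes "subspace V" "closed_subspace W"
  shows "closure (ssum V W) \<inter> W\<^sup>\<bottom> \<subseteq> closure (orthogonal_projection (W\<^sup>\<bottom>) ` V)"
proof
  let ?Q = "orthogonal_projection (W\<^sup>\<bottom>)"
  note Q = closed_subspace_orthogonal_comp[of W]
  fix z assume z: "z \<in> closure (ssum V W) \<inter> W\<^sup>\<bottom>"
  have "?Q ` ssum V W \<subseteq> ?Q ` V"
  proof
    fix y assume "y \<in> ?Q ` ssum V W"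
    then obtain v w where "y = ?Q (v + w)" "v \<in> V" "w \<in> W" unfolding ssum_def by blast
    moreover have "?Q (v + w) = ?Q v"
      using orthogonal_projection_orthogonal_comp_cong[OF assms(2)] \<open>w \<in> W\<close> by simp
    ultimately show "y \<in> ?Q ` V" by simp
  qed
  then have "?Q ` closure (ssum V W) \<subseteq> closure (?Q ` V)"
    using continuous_image_closure_subset[OF continuous_on_orthogonal_projection[OF Q] subset_UNIV]
      closure_mono by blast
  moreover have "z = ?Q z" using z orthogonal_projection_id[OF Q] by simp
  ultimately show "z \<in> closure (?Q ` V)" using z by blast
qed

lemma abs_inner_le_on_closure:
  fixes a :: "'a::real_inner"
  assumes "\<And>y. y \<in> S \<Longrightarrow> \<bar>a \<bullet> y\<bar> \<le> c * norm y" "z \<in> closure S"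
  shows "\<bar>a \<bullet> z\<bar> \<le> c * norm z"
proof -
  have "continuous_on (closure S) (\<lambda>y. \<bar>a \<bullet> y\<bar> - c * norm y)"
    by (intro continuous_intros)
  then have "\<bar>a \<bullet> z\<bar> - c * norm z \<le> 0"
    by (rule continuous_le_on_closure[OF _ assms(2)]) (simp add: assms(1))
  then show ?thesis by simp
qed

text \<open>
  \<open>friedrichs_bound V W c\<close> says \<open>cos \<angle>(V, W) \<le> c\<close> without taking a supremum, so it is
  meaningful even when one space contains the other (cf. \<open>friedrichs_cos_le_iff\<close>).
\<close>
definition friedrichs_bound :: "'a::real_inner set \<Rightarrow> 'a set \<Rightarrow> real \<Rightarrow> bool" where
  "friedrichs_bound V W c \<longleftrightarrow>
     (\<forall>v \<in> V \<inter> (V \<inter> W)\<^sup>\<bottom>. \<forall>w \<in> W \<inter> (V \<inter> W)\<^sup>\<bottom>. \<bar>v \<bullet> w\<bar> \<le> c * norm v * norm w)"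

lemma friedrichs_boundD:
  "friedrichs_bound V W c \<Longrightarrow> v \<in> V \<Longrightarrow> w \<in> W \<Longrightarrow> v \<in> (V \<inter> W)\<^sup>\<bottom> \<Longrightarrow> w \<in> (V \<inter> W)\<^sup>\<bottom>
    \<Longrightarrow> \<bar>v \<bullet> w\<bar> \<le> c * norm v * norm w"
  unfolding friedrichs_bound_def by blast

lemma friedrichs_bound_mono:
  assumes "friedrichs_bound V W c" "c \<le> c'"
  shows "friedrichs_bound V W c'"
  unfolding friedrichs_bound_def
proof (intro ballI)
  fix v w assume "v \<in> V \<inter> (V \<inter> W)\<^sup>\<bottom>" "w \<in> W \<inter> (V \<inter> W)\<^sup>\<bottom>"
  then have "\<bar>v \<bullet> w\<bar> \<le> c * (norm v * norm w)"
    using assms(1) unfolding friedrichs_bound_def by (simp add: mult.assoc)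
  also have "\<dots> \<le> c' * (norm v * norm w)" using assms(2) by (simp add: mult_right_mono)
  finally show "\<bar>v \<bullet> w\<bar> \<le> c' * norm v * norm w" by (simp add: mult.assoc)
qed

lemma friedrichs_bound_trivial: "1 \<le> c \<Longrightarrow> friedrichs_bound V W c"
  by (rule friedrichs_bound_mono[of _ _ 1])
    (simp_all add: friedrichs_bound_def Cauchy_Schwarz_ineq2)

context
  fixes V W :: "'a::{real_inner,complete_space} set" and c :: real
  assumes closed_subspace_V: "closed_subspace V" and closed_subspace_W: "closed_subspace W"
    and bound: "friedrichs_bound V W c" and c_nonneg: "0 \<le> c"
begin

lemma norm_orthogonal_projection_le_friedrichs_bound:
  assumes "v \<in> V" "v \<in> (V \<inter> W)\<^sup>\<bottom>"
  shows "norm (orthogonal_projection W v) \<le> c * norm v"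
proof -
  let ?p = "orthogonal_projection W v"
  have "?p \<in> (V \<inter> W)\<^sup>\<bottom>"
    unfolding mem_orthogonal_comp_iff
  proof
    fix m assume "m \<in> V \<inter> W"
    then have "?p \<bullet> m = v \<bullet> m"
      using inner_orthogonal_projection_commute[OF closed_subspace_W]
        orthogonal_projection_id[OF closed_subspace_W] by simp
    then show "?p \<bullet> m = 0" using assms(2) \<open>m \<in> V \<inter> W\<close> by (simp add: mem_orthogonal_comp_iff)
  qed
  then have "\<bar>v \<bullet> ?p\<bar> \<le> c * norm v * norm ?p"
    using friedrichs_boundD[OF bound assms(1) orthogonal_projection_in[OF closed_subspace_W] assms(2)]
    by blast
  moreover have "v \<bullet> ?p = (norm ?p)\<^sup>2"
    using inner_orthogonal_projection_left[OF closed_subspace_W, of v v]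
    by (simp add: inner_commute power2_norm_eq_inner)
  ultimately have "norm ?p * norm ?p \<le> (c * norm v) * norm ?p" by (simp add: power2_eq_square)
  then show ?thesis using c_nonneg by (cases "norm ?p = 0") (auto simp: mult_le_cancel_right)
qed

lemma abs_inner_le_friedrichs_bound:
  assumes "v \<in> V" "v \<in> (V \<inter> W)\<^sup>\<bottom>" "w \<in> W"
  shows "\<bar>v \<bullet> w\<bar> \<le> c * norm v * norm w"
proof -
  obtain w' where w': "w' \<in> W" "w' \<in> (V \<inter> W)\<^sup>\<bottom>" "w - w' \<in> V \<inter> W" "norm w' \<le> norm w"
    using Int_orthogonal_decomposition[OF closed_subspace_W closed_subspace_V \<open>w \<in> W\<close>]
    unfolding Int_commute[of W V] by blast
  have "v \<bullet> w = v \<bullet> w' + v \<bullet> (w - w')" by (simp add: inner_diff_right)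
  also have "v \<bullet> (w - w') = 0" using assms(2) w'(3) by (simp add: mem_orthogonal_comp_iff)
  finally have "\<bar>v \<bullet> w\<bar> \<le> c * norm v * norm w'"
    using friedrichs_boundD[OF bound assms(1) w'(1) assms(2) w'(2)] by simp
  also have "\<dots> \<le> c * norm v * norm w" using c_nonneg w'(4) by (simp add: mult_left_mono)
  finally show ?thesis .
qed

lemma norm_orthogonal_projection_orthogonal_comp_ge:
  assumes "c < 1" "v \<in> V" "v \<in> (V \<inter> W)\<^sup>\<bottom>"
  shows "sqrt (1 - c\<^sup>2) * norm v \<le> norm (orthogonal_projection (W\<^sup>\<bottom>) v)"
proof (rule power2_le_imp_le)
  let ?Q = "orthogonal_projection (W\<^sup>\<bottom>)"
  have "(norm (orthogonal_projection W v))\<^sup>2 \<le> c\<^sup>2 * (norm v)\<^sup>2"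
    using norm_orthogonal_projection_le_friedrichs_bound[OF assms(2,3)]
    by (simp add: power_mono flip: power_mult_distrib)
  moreover have "(norm v)\<^sup>2 = (norm (orthogonal_projection W v))\<^sup>2 + (norm (?Q v))\<^sup>2"
    using norm_orthogonal_projection_pythagoras[OF closed_subspace_W, of v]
    by (simp add: orthogonal_projection_orthogonal_comp[OF closed_subspace_W])
  moreover have "c\<^sup>2 \<le> 1" using assms(1) c_nonneg by (simp add: power_le_one)
  then have "(sqrt (1 - c\<^sup>2) * norm v)\<^sup>2 = (norm v)\<^sup>2 - c\<^sup>2 * (norm v)\<^sup>2"
    by (simp add: power_mult_distrib algebra_simps)
  ultimately show "(sqrt (1 - c\<^sup>2) * norm v)\<^sup>2 \<le> (norm (?Q v))\<^sup>2" by linarith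
qed simp

lemma norm_projection_defect_le_friedrichs_bound:
  assumes "c \<le> 1" "a \<in> V" "a \<in> (V \<inter> W)\<^sup>\<bottom>"
  defines "b \<equiv> orthogonal_projection W a"
  shows "norm (b - orthogonal_projection V b) \<le> c * norm (a - b)"
proof (rule power2_le_imp_le)
  define s where "s = orthogonal_projection V b"
  have "norm b \<le> c * norm a"
    unfolding b_def by (rule norm_orthogonal_projection_le_friedrichs_bound[OF assms(2,3)])
  then have b_le: "(norm b)\<^sup>2 \<le> c\<^sup>2 * (norm a)\<^sup>2"
    by (simp add: power_mono flip: power_mult_distrib)
  have "s \<bullet> a = b \<bullet> a"
    unfolding s_def using inner_orthogonal_projection_commute[OF closed_subspace_V, of b a]
      orthogonal_projection_id[OF closed_subspace_V assms(2)] by simp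
  also have "\<dots> = (norm b)\<^sup>2"
    unfolding b_def using inner_orthogonal_projection_left[OF closed_subspace_W, of a a]
    by (simp add: inner_commute power2_norm_eq_inner)
  finally have sa: "s \<bullet> a = (norm b)\<^sup>2" .
  have bs: "(norm (b - s))\<^sup>2 = (norm b)\<^sup>2 - (norm s)\<^sup>2"
    using norm_orthogonal_projection_pythagoras[OF closed_subspace_V, of b] unfolding s_def by simp
  have ab: "(norm (a - b))\<^sup>2 = (norm a)\<^sup>2 - (norm b)\<^sup>2"
    using norm_orthogonal_projection_pythagoras[OF closed_subspace_W, of a] unfolding b_def by simp
  have "(norm (c\<^sup>2 *\<^sub>R a - s))\<^sup>2 = c\<^sup>2 * c\<^sup>2 * (a \<bullet> a) - 2 * c\<^sup>2 * (s \<bullet> a) + s \<bullet> s"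
    by (simp only: power2_norm_eq_inner)
      (simp add: inner_diff_left inner_diff_right inner_commute algebra_simps)
  then have as: "(norm (c\<^sup>2 *\<^sub>R a - s))\<^sup>2 = c\<^sup>2 * c\<^sup>2 * (norm a)\<^sup>2 - 2 * c\<^sup>2 * (norm b)\<^sup>2 + (norm s)\<^sup>2"
    by (simp only: sa power2_norm_eq_inner)
  have "c\<^sup>2 * (norm (a - b))\<^sup>2 - (norm (b - s))\<^sup>2
      = (norm (c\<^sup>2 *\<^sub>R a - s))\<^sup>2 + (1 - c\<^sup>2) * (c\<^sup>2 * (norm a)\<^sup>2 - (norm b)\<^sup>2)"
    unfolding ab bs as by (simp add: algebra_simps power2_eq_square)
  moreover have "0 \<le> (1 - c\<^sup>2) * (c\<^sup>2 * (norm a)\<^sup>2 - (norm b)\<^sup>2)"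
    using b_le c_nonneg assms(1) by (simp add: power_le_one)
  moreover have "0 \<le> (norm (c\<^sup>2 *\<^sub>R a - s))\<^sup>2" by simp
  ultimately show "(norm (b - s))\<^sup>2 \<le> (c * norm (a - b))\<^sup>2"
    unfolding power_mult_distrib by linarith
qed (use c_nonneg in simp)

lemma abs_inner_orthogonal_projections_le:
  assumes "c \<le> 1" "a \<in> V"
  shows "\<bar>orthogonal_projection (V\<^sup>\<bottom>) b \<bullet> orthogonal_projection (W\<^sup>\<bottom>) a\<bar>
    \<le> c * norm (orthogonal_projection (V\<^sup>\<bottom>) b) * norm (orthogonal_projection (W\<^sup>\<bottom>) a)"
proof -
  let ?P = "orthogonal_projection (V\<^sup>\<bottom>)" and ?Q = "orthogonal_projection (W\<^sup>\<bottom>)"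
  obtain a' where a': "a' \<in> V" "a' \<in> (V \<inter> W)\<^sup>\<bottom>" "a - a' \<in> V \<inter> W"
    using Int_orthogonal_decomposition[OF closed_subspace_V closed_subspace_W \<open>a \<in> V\<close>] .
  define b' where "b' = orthogonal_projection W a'"
  have "?Q a = a' - b'"
    using orthogonal_projection_orthogonal_comp_cong[OF closed_subspace_W, of a a'] a'(3)
    by (simp add: b'_def orthogonal_projection_orthogonal_comp[OF closed_subspace_W])
  moreover have "?P b \<in> V\<^sup>\<bottom>" by (rule orthogonal_projection_in[OF closed_subspace_orthogonal_comp])
  then have "?P b \<bullet> a' = 0" "?P b \<bullet> orthogonal_projection V b' = 0"
    using a'(1) orthogonal_projection_in[OF closed_subspace_V] by (simp_all add: mem_orthogonal_comp_iff)
  ultimately have "\<bar>?P b \<bullet> ?Q a\<bar> = \<bar>?P b \<bullet> (b' - orthogonal_projection V b')\<bar>"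
    by (simp add: inner_diff_right)
  also have "\<dots> \<le> norm (?P b) * norm (b' - orthogonal_projection V b')"
    by (rule Cauchy_Schwarz_ineq2)
  also have "\<dots> \<le> norm (?P b) * (c * norm (a' - b'))"
    unfolding b'_def
    by (intro mult_left_mono norm_projection_defect_le_friedrichs_bound assms(1) a'(1,2)) simp
  finally show ?thesis using \<open>?Q a = a' - b'\<close> by (simp add: ac_simps)
qed

lemma friedrichs_bound_orthogonal_comp: "friedrichs_bound (V\<^sup>\<bottom>) (W\<^sup>\<bottom>) c"
proof (cases "c \<le> 1")
  case False
  then show ?thesis by (simp add: friedrichs_bound_trivial)
next
  case True
  let ?P = "orthogonal_projection (V\<^sup>\<bottom>)" and ?Q = "orthogonal_projection (W\<^sup>\<bottom>)"
  have sV: "subspace V" and sW: "subspace W"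
    using closed_subspace_V closed_subspace_W by (auto simp: closed_subspace_def)
  show ?thesis
    unfolding friedrichs_bound_def
  proof (intro ballI)
    fix u v
    assume u: "u \<in> V\<^sup>\<bottom> \<inter> (V\<^sup>\<bottom> \<inter> W\<^sup>\<bottom>)\<^sup>\<bottom>" and v: "v \<in> W\<^sup>\<bottom> \<inter> (V\<^sup>\<bottom> \<inter> W\<^sup>\<bottom>)\<^sup>\<bottom>"
    have "(V\<^sup>\<bottom> \<inter> W\<^sup>\<bottom>)\<^sup>\<bottom> = closure (ssum W V)"
      using orthogonal_comp_Int_orthogonal_comp[OF sW sV] by (simp add: Int_commute)
    then have "u \<in> closure (?P ` W)"
      using u closure_ssum_Int_orthogonal_comp_subset[OF sW closed_subspace_V] by blast
    have "v \<in> closure (?Q ` V)"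
      using v closure_ssum_Int_orthogonal_comp_subset[OF sV closed_subspace_W]
        orthogonal_comp_Int_orthogonal_comp[OF sV sW] by blast
    have Pv: "\<bar>?P b \<bullet> v\<bar> \<le> (c * norm (?P b)) * norm v" for b
      by (rule abs_inner_le_on_closure[OF _ \<open>v \<in> closure (?Q ` V)\<close>])
        (force intro: abs_inner_orthogonal_projections_le True)
    have "\<bar>v \<bullet> u\<bar> \<le> (c * norm v) * norm u"
    proof (rule abs_inner_le_on_closure[OF _ \<open>u \<in> closure (?P ` W)\<close>])
      fix y assume "y \<in> ?P ` W"
      then obtain b where "y = ?P b" by blast
      then show "\<bar>v \<bullet> y\<bar> \<le> c * norm v * norm y"
        using Pv[of b] by (simp add: inner_commute ac_simps)
    qed
    then show "\<bar>u \<bullet> v\<bar> \<le> c * norm u * norm v" by (simp add: inner_commute ac_simps)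
  qed
qed

end

lemma exists_unit_orthogonal_Int:
  fixes V W :: "'a::{real_inner,complete_space} set"
  assumes "closed_subspace V" "closed_subspace W" "\<not> V \<subseteq> W"
  obtains u where "u \<in> V" "u \<in> (V \<inter> W)\<^sup>\<bottom>" "norm u = 1"
proof -
  obtain v where "v \<in> V" "v \<notin> W" using assms(3) by blast
  then obtain v' where v': "v' \<in> V" "v' \<in> (V \<inter> W)\<^sup>\<bottom>" "v - v' \<in> V \<inter> W"
    using Int_orthogonal_decomposition[OF assms(1,2)] by metis
  have "v' \<noteq> 0" using v'(3) \<open>v \<notin> W\<close> by auto
  have "subspace V" "subspace ((V \<inter> W)\<^sup>\<bottom>)"
    using assms(1) subspace_orthogonal_comp by (auto simp: closed_subspace_def)
  then show thesis
    using that[of "(1 / norm v') *\<^sub>R v'"] v'(1,2) \<open>v' \<noteq> 0\<close> by (simp add: subspace_scale)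
qed

context
  fixes V W :: "'a::{real_inner,complete_space} set"
  assumes closed_subspace_V: "closed_subspace V" and closed_subspace_W: "closed_subspace W"
    and not_subset: "\<not> V \<subseteq> W" "\<not> W \<subseteq> V"
begin

private abbreviation cosines where
  "cosines \<equiv> {\<bar>w1 \<bullet> w2\<bar> | w1 w2. w1 \<in> V \<and> w2 \<in> W \<and> norm w1 = 1 \<and> norm w2 = 1 \<and>
       (\<forall>x \<in> V \<inter> W. w1 \<bullet> x = 0) \<and> (\<forall>x \<in> V \<inter> W. w2 \<bullet> x = 0)}"

private lemma cosines_nonempty: "cosines \<noteq> {}"
proof -
  obtain u1 where "u1 \<in> V" "u1 \<in> (V \<inter> W)\<^sup>\<bottom>" "norm u1 = 1"
    using exists_unit_orthogonal_Int[OF closed_subspace_V closed_subspace_W not_subset(1)] .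
  moreover obtain u2 where "u2 \<in> W" "u2 \<in> (W \<inter> V)\<^sup>\<bottom>" "norm u2 = 1"
    using exists_unit_orthogonal_Int[OF closed_subspace_W closed_subspace_V not_subset(2)] .
  ultimately have "\<bar>u1 \<bullet> u2\<bar> \<in> cosines" by (auto simp: mem_orthogonal_comp_iff)
  then show ?thesis by blast
qed

private lemma bdd_above_cosines: "bdd_above cosines"
  by (rule bdd_aboveI[of _ 1]) (auto intro: order_trans[OF Cauchy_Schwarz_ineq2])

lemma friedrichs_bound_friedrichs_cos: "friedrichs_bound V W (friedrichs_cos V W)"
  unfolding friedrichs_bound_def
proof (intro ballI)
  fix v w assume v: "v \<in> V \<inter> (V \<inter> W)\<^sup>\<bottom>" and w: "w \<in> W \<inter> (V \<inter> W)\<^sup>\<bottom>"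
  show "\<bar>v \<bullet> w\<bar> \<le> friedrichs_cos V W * norm v * norm w"
  proof (cases "v = 0 \<or> w = 0")
    case False
    define a where "a = (1 / norm v) *\<^sub>R v"
    define b where "b = (1 / norm w) *\<^sub>R w"
    have "subspace V" "subspace W" "subspace ((V \<inter> W)\<^sup>\<bottom>)"
      using closed_subspace_V closed_subspace_W subspace_orthogonal_comp
      by (auto simp: closed_subspace_def)
    then have "a \<in> V" "b \<in> W" "a \<in> (V \<inter> W)\<^sup>\<bottom>" "b \<in> (V \<inter> W)\<^sup>\<bottom>"
      using v w unfolding a_def b_def by (auto intro: subspace_scale)
    moreover have "norm a = 1" "norm b = 1" using False unfolding a_def b_def by auto
    ultimately have "\<bar>a \<bullet> b\<bar> \<in> cosines" by (auto simp: mem_orthogonal_comp_iff)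
    then have "\<bar>a \<bullet> b\<bar> \<le> friedrichs_cos V W"
      unfolding friedrichs_cos_def using bdd_above_cosines by (rule cSup_upper)
    moreover have "\<bar>v \<bullet> w\<bar> = norm v * norm w * \<bar>a \<bullet> b\<bar>"
      using False unfolding a_def b_def by (simp add: abs_mult)
    ultimately show ?thesis by (simp add: mult_left_mono ac_simps)
  qed auto
qed

lemma friedrichs_cos_le_iff: "friedrichs_cos V W \<le> c \<longleftrightarrow> friedrichs_bound V W c"
proof
  show "friedrichs_cos V W \<le> c \<Longrightarrow> friedrichs_bound V W c"
    using friedrichs_bound_friedrichs_cos by (rule friedrichs_bound_mono)
  assume bound: "friedrichs_bound V W c"
  show "friedrichs_cos V W \<le> c"
    unfolding friedrichs_cos_def
  proof (rule cSup_least[OF cosines_nonempty])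
    fix s assume "s \<in> cosines"
    then show "s \<le> c" using friedrichs_boundD[OF bound] by (force simp: mem_orthogonal_comp_iff)
  qed
qed

lemma friedrichs_cos_nonneg: "0 \<le> friedrichs_cos V W"
proof -
  obtain s where "s \<in> cosines" using cosines_nonempty by blast
  then have "s \<le> friedrichs_cos V W"
    unfolding friedrichs_cos_def using bdd_above_cosines by (rule cSup_upper)
  moreover have "0 \<le> s" using \<open>s \<in> cosines\<close> by auto
  ultimately show ?thesis by linarith
qed

lemma friedrichs_cos_le_1: "friedrichs_cos V W \<le> 1"
  by (simp add: friedrichs_cos_le_iff friedrichs_bound_trivial)

lemma friedrichs_bound_cos_friedrichs_angle:
  assumes "0 < a" "a \<le> friedrichs_angle V W"
  shows "0 \<le> cos a" "cos a < 1" "friedrichs_bound V W (cos a)"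
proof -
  let ?f = "friedrichs_cos V W"
  have f: "-1 \<le> ?f" "?f \<le> 1" using friedrichs_cos_nonneg friedrichs_cos_le_1 by linarith+
  have "a \<le> arccos ?f" "arccos ?f \<le> pi"
    using assms(2) arccos_ubound[OF f] unfolding friedrichs_angle_def by simp_all
  then have "cos (arccos ?f) \<le> cos a"
    using assms(1) arccos_lbound[OF f] by (simp add: cos_mono_le_eq)
  then have "?f \<le> cos a" using f by simp
  then show "friedrichs_bound V W (cos a)" by (simp add: friedrichs_cos_le_iff)
  show "0 \<le> cos a" using \<open>?f \<le> cos a\<close> friedrichs_cos_nonneg by linarith
  have "cos a < cos 0"
    using assms(1) \<open>a \<le> arccos ?f\<close> \<open>arccos ?f \<le> pi\<close> by (subst cos_mono_less_eq) auto
  then show "cos a < 1" by simp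
qed

end

locale three_subspaces =
  fixes V1 V2 V3 :: "'a::{real_inner,complete_space} set" and c12 c13 c23 :: real
  assumes closed_subspace: "closed_subspace V1" "closed_subspace V2" "closed_subspace V3"
    and bound12: "friedrichs_bound V1 V2 c12" and bound13: "friedrichs_bound V1 V3 c13"
    and bound23: "friedrichs_bound V2 V3 c23"
    and c12: "0 \<le> c12" and c13: "0 \<le> c13" "c13 < 1" and c23: "0 \<le> c23" "c23 < 1"
begin

abbreviation Q where "Q \<equiv> orthogonal_projection (V3\<^sup>\<bottom>)"

abbreviation sum_bound where
  "sum_bound \<equiv> (c12 + c13 * c23) / (sqrt (1 - c13\<^sup>2) * sqrt (1 - c23\<^sup>2))"

lemma sum_bound_nonneg: "0 \<le> sum_bound"
  using c12 c13 c23 by (simp add: power_le_one)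

lemma subspaces: "subspace V1" "subspace V2" "subspace V3"
  using closed_subspace by (auto simp: closed_subspace_def)

lemma abs_inner_orthogonal_projection_V3_le:
  assumes "x \<in> V1" "x \<in> (V1 \<inter> V2)\<^sup>\<bottom>" "x \<in> (V1 \<inter> V3)\<^sup>\<bottom>" "y \<in> V2" "y \<in> (V2 \<inter> V3)\<^sup>\<bottom>"
  shows "\<bar>x \<bullet> Q y\<bar> \<le> (c12 + c13 * c23) * norm x * norm y"
proof -
  let ?P = "orthogonal_projection V3"
  have "x \<bullet> Q y = x \<bullet> y - ?P x \<bullet> ?P y"
    using inner_orthogonal_projection_commute[OF closed_subspace(3), of x y]
      inner_orthogonal_projection_left[OF closed_subspace(3), of x y]
    by (simp add: orthogonal_projection_orthogonal_comp[OF closed_subspace(3)] inner_diff_right)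
  moreover have "\<bar>x \<bullet> y\<bar> \<le> c12 * norm x * norm y"
    by (rule abs_inner_le_friedrichs_bound[OF closed_subspace(1,2) bound12 c12 assms(1,2,4)])
  moreover have "norm (?P x) \<le> c13 * norm x" "norm (?P y) \<le> c23 * norm y"
    using norm_orthogonal_projection_le_friedrichs_bound[OF closed_subspace(1,3) bound13 c13(1) assms(1,3)]
      norm_orthogonal_projection_le_friedrichs_bound[OF closed_subspace(2,3) bound23 c23(1) assms(4,5)] .
  then have "\<bar>?P x \<bullet> ?P y\<bar> \<le> (c13 * norm x) * (c23 * norm y)"
    using Cauchy_Schwarz_ineq2[of "?P x" "?P y"] c13(1)
    by (meson mult_mono norm_ge_zero order_trans mult_nonneg_nonneg)
  ultimately show ?thesis by (simp add: algebra_simps)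
qed

lemma abs_inner_orthogonal_projection_V3_le_norm:
  assumes "x \<in> V1" "x \<in> (V1 \<inter> V2)\<^sup>\<bottom>" "x \<in> (V1 \<inter> V3)\<^sup>\<bottom>" "y \<in> V2"
  shows "\<bar>x \<bullet> Q y\<bar> \<le> (c12 + c13 * c23) / sqrt (1 - c23\<^sup>2) * norm x * norm (Q y)"
proof -
  obtain y1 where y1: "y1 \<in> V2" "y1 \<in> (V2 \<inter> V3)\<^sup>\<bottom>" "y - y1 \<in> V2 \<inter> V3"
    using Int_orthogonal_decomposition[OF closed_subspace(2,3) \<open>y \<in> V2\<close>] by metis
  have Qy: "Q y = Q y1"
    using orthogonal_projection_orthogonal_comp_cong[OF closed_subspace(3)] y1(3) by blast
  define s where "s = sqrt (1 - c23\<^sup>2)"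
  have "0 < s" unfolding s_def using c23 by (simp add: abs_square_less_1)
  have "\<bar>x \<bullet> Q y1\<bar> \<le> (c12 + c13 * c23) * norm x * norm y1"
    by (rule abs_inner_orthogonal_projection_V3_le[OF assms(1-3) y1(1,2)])
  also have "\<dots> = (c12 + c13 * c23) / s * norm x * (s * norm y1)"
    using \<open>0 < s\<close> by simp
  also have "\<dots> \<le> (c12 + c13 * c23) / s * norm x * norm (Q y1)"
    unfolding s_def
    using norm_orthogonal_projection_orthogonal_comp_ge[OF closed_subspace(2,3) bound23 c23 y1(1,2)]
      \<open>0 < s\<close> c12 c13 c23 by (intro mult_left_mono) (auto simp: s_def)
  finally show ?thesis unfolding s_def Qy .
qed

lemma reduced_representative_V1:
  assumes "x \<in> V1"
  obtains x' where "x' \<in> V1" "x' \<in> (V1 \<inter> V2)\<^sup>\<bottom>" "x' \<in> (V1 \<inter> V3)\<^sup>\<bottom>"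
    "sqrt (1 - c13\<^sup>2) * norm x' \<le> norm (Q x)"
    "\<And>w. w \<in> V3\<^sup>\<bottom> \<Longrightarrow> w \<in> (V1 \<inter> V2)\<^sup>\<bottom> \<Longrightarrow> x' \<bullet> w = Q x \<bullet> w"
proof -
  define L where "L = closure (ssum (V1 \<inter> V2) (V1 \<inter> V3))"
  have sN: "subspace (V1 \<inter> V2)" and sA: "subspace (V1 \<inter> V3)"
    using subspaces by (auto intro: subspace_inter)
  have L: "closed_subspace L" unfolding L_def by (rule closed_subspace_closure_ssum[OF sN sA])
  have L_perp: "L\<^sup>\<bottom> = (V1 \<inter> V2)\<^sup>\<bottom> \<inter> (V1 \<inter> V3)\<^sup>\<bottom>"
    unfolding L_def orthogonal_comp_closure by (rule orthogonal_comp_ssum[OF sN sA])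
  have "L \<subseteq> V1"
    unfolding L_def using closed_subspace(1) subspaces(1)
    by (intro closure_minimal) (auto simp: closed_subspace_def ssum_def subspace_add)
  obtain x1 where x1: "x1 \<in> V1" "x1 \<in> (V1 \<inter> V3)\<^sup>\<bottom>" "x - x1 \<in> V1 \<inter> V3"
    using Int_orthogonal_decomposition[OF closed_subspace(1,3) \<open>x \<in> V1\<close>] by metis
  have Qx: "Q x = Q x1"
    using orthogonal_projection_orthogonal_comp_cong[OF closed_subspace(3)] x1(3) by blast
  define x' where "x' = x1 - orthogonal_projection L x1"
  show thesis
  proof
    show "x' \<in> V1"
      unfolding x'_def using x1(1) orthogonal_projection_in[OF L] \<open>L \<subseteq> V1\<close> subspaces(1)
      by (blast intro: subspace_diff)
    have "x' \<in> L\<^sup>\<bottom>" unfolding x'_def by (rule orthogonal_projection_orthogonal[OF L])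
    then show "x' \<in> (V1 \<inter> V2)\<^sup>\<bottom>" "x' \<in> (V1 \<inter> V3)\<^sup>\<bottom>" using L_perp by auto
    have "norm x' \<le> norm x1"
      using norm_orthogonal_projection_le[OF closed_subspace_orthogonal_comp, of L x1]
      by (simp add: x'_def orthogonal_projection_orthogonal_comp[OF L])
    then have "sqrt (1 - c13\<^sup>2) * norm x' \<le> sqrt (1 - c13\<^sup>2) * norm x1"
      using c13 by (intro mult_left_mono) (simp_all add: power_le_one)
    also have "\<dots> \<le> norm (Q x)"
      unfolding Qx by (rule norm_orthogonal_projection_orthogonal_comp_ge[OF closed_subspace(1,3) bound13 c13 x1(1,2)])
    finally show "sqrt (1 - c13\<^sup>2) * norm x' \<le> norm (Q x)" .
    fix w assume w: "w \<in> V3\<^sup>\<bottom>" "w \<in> (V1 \<inter> V2)\<^sup>\<bottom>"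
    then have "w \<in> L\<^sup>\<bottom>" using orthogonal_comp_anti_mono[of "V1 \<inter> V3" V3] L_perp by blast
    then have "w \<bullet> orthogonal_projection L x1 = 0"
      using orthogonal_projection_in[OF L] by (simp add: mem_orthogonal_comp_iff)
    moreover have "w \<bullet> orthogonal_projection V3 x1 = 0"
      using w(1) orthogonal_projection_in[OF closed_subspace(3)] by (simp add: mem_orthogonal_comp_iff)
    ultimately show "x' \<bullet> w = Q x \<bullet> w"
      unfolding Qx unfolding x'_def orthogonal_projection_orthogonal_comp[OF closed_subspace(3)]
      by (simp add: inner_diff_left inner_diff_right inner_commute)
  qed
qed

lemma abs_inner_closure_ssum_V2_V3_le:
  assumes "x \<in> V1" "w \<in> closure (ssum V2 V3)" "w \<in> V3\<^sup>\<bottom>" "w \<in> (V1 \<inter> V2)\<^sup>\<bottom>"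
  shows "\<bar>Q x \<bullet> w\<bar> \<le> sum_bound * norm (Q x) * norm w"
proof -
  obtain x' where x': "x' \<in> V1" "x' \<in> (V1 \<inter> V2)\<^sup>\<bottom>" "x' \<in> (V1 \<inter> V3)\<^sup>\<bottom>"
    and x'_le: "sqrt (1 - c13\<^sup>2) * norm x' \<le> norm (Q x)" and x'_w: "x' \<bullet> w = Q x \<bullet> w"
    using reduced_representative_V1[OF \<open>x \<in> V1\<close>] assms(3,4) by metis
  have "0 < sqrt (1 - c13\<^sup>2)" using c13 by (simp add: abs_square_less_1)
  have on_V2: "\<bar>x' \<bullet> Q y\<bar> \<le> sum_bound * norm (Q x) * norm (Q y)" if "y \<in> V2" for y
  proof -
    have "\<bar>x' \<bullet> Q y\<bar> \<le> (c12 + c13 * c23) / sqrt (1 - c23\<^sup>2) * norm x' * norm (Q y)"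
      by (rule abs_inner_orthogonal_projection_V3_le_norm[OF x' that])
    also have "\<dots> = sum_bound * (sqrt (1 - c13\<^sup>2) * norm x') * norm (Q y)"
      using \<open>0 < sqrt (1 - c13\<^sup>2)\<close> by simp
    also have "\<dots> \<le> sum_bound * norm (Q x) * norm (Q y)"
      using x'_le sum_bound_nonneg by (intro mult_right_mono mult_left_mono) auto
    finally show ?thesis .
  qed
  have "w \<in> closure (Q ` V2)"
    using assms(2,3) closure_ssum_Int_orthogonal_comp_subset[OF subspaces(2) closed_subspace(3)] by blast
  then have "\<bar>x' \<bullet> w\<bar> \<le> (sum_bound * norm (Q x)) * norm w"
  proof (rule abs_inner_le_on_closure[rotated])
    fix y assume "y \<in> Q ` V2"
    then show "\<bar>x' \<bullet> y\<bar> \<le> sum_bound * norm (Q x) * norm y" using on_V2 by blast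
  qed
  then show ?thesis using x'_w by simp
qed

lemma friedrichs_bound_closure_ssum:
  "friedrichs_bound (closure (ssum V1 V3)) (closure (ssum V2 V3)) sum_bound"
  unfolding friedrichs_bound_def
proof (intro ballI)
  let ?W = "closure (ssum V1 V3) \<inter> closure (ssum V2 V3)"
  fix w1 w2 assume w1: "w1 \<in> closure (ssum V1 V3) \<inter> ?W\<^sup>\<bottom>" and w2: "w2 \<in> closure (ssum V2 V3) \<inter> ?W\<^sup>\<bottom>"
  have "V3 \<subseteq> ?W" "V1 \<inter> V2 \<subseteq> ?W"
    using subset_ssum_right[OF subspaces(1)] subset_ssum_right[OF subspaces(2)]
      subset_ssum_left[OF subspaces(3), of V1] subset_ssum_left[OF subspaces(3), of V2]
      closure_subset by blast+
  then have perp: "w1 \<in> V3\<^sup>\<bottom>" "w2 \<in> V3\<^sup>\<bottom>" "w2 \<in> (V1 \<inter> V2)\<^sup>\<bottom>"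
    using w1 w2 orthogonal_comp_anti_mono by blast+
  have "w1 \<in> closure (Q ` V1)"
    using w1 perp(1) closure_ssum_Int_orthogonal_comp_subset[OF subspaces(1) closed_subspace(3)] by blast
  moreover have "\<bar>w2 \<bullet> y\<bar> \<le> (sum_bound * norm w2) * norm y" if y: "y \<in> Q ` V1" for y
  proof -
    obtain x where "x \<in> V1" "y = Q x" using y by blast
    then show ?thesis
      using abs_inner_closure_ssum_V2_V3_le[OF \<open>x \<in> V1\<close> _ perp(2,3)] w2
      by (simp add: inner_commute ac_simps)
  qed
  ultimately have "\<bar>w2 \<bullet> w1\<bar> \<le> (sum_bound * norm w2) * norm w1"
    by (rule abs_inner_le_on_closure[rotated])
  then show "\<bar>w1 \<bullet> w2\<bar> \<le> sum_bound * norm w1 * norm w2" by (simp add: inner_commute ac_simps)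
qed

end

theorem lemma4p2:
  fixes V1 V2 V3 :: "'a::{real_inner, complete_space} set"
    and a12 a13 a23 :: real
  assumes cs: "closed_subspace V1" "closed_subspace V2" "closed_subspace V3"
    and nc12: "\<not> V1 \<subseteq> V2" "\<not> V2 \<subseteq> V1"
    and nc13: "\<not> V1 \<subseteq> V3" "\<not> V3 \<subseteq> V1"
    and nc23: "\<not> V2 \<subseteq> V3" "\<not> V3 \<subseteq> V2"
    and a12: "0 < a12" "a12 \<le> friedrichs_angle V1 V2"
    and a13: "0 < a13" "a13 \<le> friedrichs_angle V1 V3"
    and a23: "0 < a23" "a23 \<le> friedrichs_angle V2 V3"
  shows
    "(\<not> closure (ssum V1 V3) \<subseteq> closure (ssum V2 V3) \<and>
      \<not> closure (ssum V2 V3) \<subseteq> closure (ssum V1 V3) \<longrightarrow>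
      friedrichs_cos (closure (ssum V1 V3)) (closure (ssum V2 V3))
        \<le> (cos a12 + cos a13 * cos a23) / (sqrt (1 - (cos a13)\<^sup>2) * sqrt (1 - (cos a23)\<^sup>2)))
   \<and> (\<not> V1 \<inter> V3 \<subseteq> V2 \<inter> V3 \<and> \<not> V2 \<inter> V3 \<subseteq> V1 \<inter> V3 \<longrightarrow>
      friedrichs_cos (V1 \<inter> V3) (V2 \<inter> V3)
        \<le> (cos a12 + cos a13 * cos a23) / (sqrt (1 - (cos a13)\<^sup>2) * sqrt (1 - (cos a23)\<^sup>2)))"
proof -
  have s: "subspace V1" "subspace V2" "subspace V3" using cs by (auto simp: closed_subspace_def)
  note ang12 = friedrichs_bound_cos_friedrichs_angle[OF cs(1,2) nc12 a12]
    and ang13 = friedrichs_bound_cos_friedrichs_angle[OF cs(1,3) nc13 a13]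
    and ang23 = friedrichs_bound_cos_friedrichs_angle[OF cs(2,3) nc23 a23]
  interpret V: three_subspaces V1 V2 V3 "cos a12" "cos a13" "cos a23"
    using cs ang12 ang13 ang23 by unfold_locales auto
  interpret perp: three_subspaces "V1\<^sup>\<bottom>" "V2\<^sup>\<bottom>" "V3\<^sup>\<bottom>" "cos a12" "cos a13" "cos a23"
    using cs ang12 ang13 ang23
    by unfold_locales (auto simp: closed_subspace_orthogonal_comp friedrichs_bound_orthogonal_comp)
  have "friedrichs_bound (V1 \<inter> V3) (V2 \<inter> V3) perp.sum_bound"
    using friedrichs_bound_orthogonal_comp[OF closed_subspace_closure_ssum closed_subspace_closure_ssum
        perp.friedrichs_bound_closure_ssum perp.sum_bound_nonneg]
    by (simp add: subspace_orthogonal_comp orthogonal_comp_closure_ssum_orthogonal_comp cs)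
  then show ?thesis
    using V.friedrichs_bound_closure_ssum
      friedrichs_cos_le_iff[OF closed_subspace_closure_ssum[OF s(1,3)] closed_subspace_closure_ssum[OF s(2,3)]]
      friedrichs_cos_le_iff[OF closed_subspace_Int[OF cs(1,3)] closed_subspace_Int[OF cs(2,3)]]
    by blast
qed

end
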